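(* Let $n\ge1$ and let $\mathcal A_n$ be the real Lie algebra with basis $\{Y,X_1,\dots,X_n\}$ and brackets $[Y,X_i]=X_i$, $[X_i,X_j]=0$. For every inner product on $\mathcal A_n$, every geodesic element is orthogonal to the derived algebra $\mathcal A_n'=\operatorname{Span}(X_1,\dots,X_n)$; consequently, up to scaling, there is only one geodesic element.
   Context: For an inner product $\langle\cdot,\cdot\rangle$ on a real Lie algebra $\mathfrak g$, a nonzero $X\in\mathfrak g$ is a geodesic element if $\langle X,[X,Z]\rangle=0$ for all $Z\in\mathfrak g$. *)

theory Defs
  imports "HOL-Analysis.Analysis"
begin

text \<open>The Lie algebra A_n: an element (a, v) stands for a Y + sum_i v_i X_i,
  where the index type 'n (finite, nonempty) has CARD('n) = n elements.
  Brackets: [Y, X_i] = X_i, [X_i, X_j] = 0, extended bilinearly and antisymmetrically.\<close>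

type_synonym 'n An = "real \<times> (real ^ 'n)"

definition An_bracket :: "'n::finite An \<Rightarrow> 'n An \<Rightarrow> 'n An" where
  "An_bracket x y = (0, fst x *\<^sub>R snd y - fst y *\<^sub>R snd x)"

definition An_derived :: "'n::finite An set" where
  "An_derived = span {An_bracket x y | x y. True}"

definition is_inner_product :: "('a::real_vector \<Rightarrow> 'a \<Rightarrow> real) \<Rightarrow> bool" where
  "is_inner_product B \<longleftrightarrow> (\<forall>x. linear (B x)) \<and> (\<forall>x y. B x y = B y x)
     \<and> (\<forall>x. x \<noteq> 0 \<longrightarrow> B x x > 0)"

definition geodesic_element :: "('n::finite An \<Rightarrow> 'n An \<Rightarrow> real) \<Rightarrow> 'n An \<Rightarrow> bool" where
  "geodesic_element B X \<longleftrightarrow> X \<noteq> 0 \<and> (\<forall>Z. B X (An_bracket X Z) = 0)"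

end

theory Submission
  imports Defs
begin

text \<open>Since every bracket lies in the ideal \<open>{0} \<times> \<real>\<^sup>n\<close> and \<open>ad X\<close> maps onto that ideal
  whenever the \<open>Y\<close>-coordinate of \<open>X\<close> is nonzero, the geodesic elements are exactly the
  nonzero vectors orthogonal to the ideal (a vector with zero \<open>Y\<close>-coordinate is excluded
  because \<open>[X, Y] = -X\<close>). The ideal has codimension one, so its orthogonal complement
  is a line: it contains \<open>Y + v\<close> for the \<open>v\<close> solving the Gram system, and the difference of
  two suitably scaled orthogonal vectors lies in the ideal and is orthogonal to itself.\<close>

lemma is_inner_productD:
  assumes "is_inner_product B"
  shows "linear (B x)" "linear (\<lambda>x. B x y)" "B x y = B y x" "x \<noteq> 0 \<Longrightarrow> B x x > 0"
  using assms unfolding is_inner_product_def by (auto simp: linear_iff)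

lemma is_inner_product_self_eq_0:
  assumes "is_inner_product B" "B x x = 0"
  shows "x = 0"
  using is_inner_productD(4)[OF assms(1)] assms(2) by force

lemma linear_Pair_zero: "linear (\<lambda>w. (0::'a::real_vector, w))"
  by (rule linearI) auto

lemma is_inner_product_linear_fibre:
  assumes "is_inner_product B"
  shows "linear (\<lambda>w. B x (0, w))" "linear (\<lambda>v. B (0, v) y)"
  using linear_compose[OF linear_Pair_zero is_inner_productD(1)[OF assms]]
    linear_compose[OF linear_Pair_zero is_inner_productD(2)[OF assms]]
  by (simp_all add: o_def)

lemma linear_eq_0_on_axis:
  fixes g :: "real ^ 'n::finite \<Rightarrow> real"
  assumes "linear g" "\<And>i. g (axis i 1) = 0"
  shows "g w = 0"
proof -
  have "g = (\<lambda>_. 0)"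
    using assms by (intro linear_eq_stdbasis) (auto simp: Basis_vec_def linear_zero)
  then show ?thesis by simp
qed

lemma An_derived_subset_fibre: "(An_derived :: 'n::finite An set) \<subseteq> range (Pair 0)"
proof -
  have "subspace (range (Pair (0::real)) :: 'n An set)"
    unfolding subspace_def by (auto simp: zero_prod_def)
  moreover have "{An_bracket x y | x y::'n An. True} \<subseteq> range (Pair 0)"
    by (auto simp: An_bracket_def)
  ultimately show ?thesis
    unfolding An_derived_def by (intro span_minimal)
qed

lemma geodesic_element_iff_orthogonal_fibre:
  assumes ip: "is_inner_product B"
  shows "geodesic_element B X \<longleftrightarrow> X \<noteq> 0 \<and> (\<forall>w. B X (0, w) = 0)"
proof
  assume "geodesic_element B X"
  then have X: "X \<noteq> 0" and geo: "\<And>Z. B X (An_bracket X Z) = 0"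
    unfolding geodesic_element_def by auto
  have "fst X \<noteq> 0"
  proof
    assume "fst X = 0"
    then have "An_bracket X (1, 0) = - X"
      by (simp add: An_bracket_def prod_eq_iff)
    then have "B X X = 0"
      using geo[of "(1, 0)"] linear_neg[OF is_inner_productD(1)[OF ip]] by simp
    then show False
      using X is_inner_product_self_eq_0[OF ip] by blast
  qed
  then have "An_bracket X (0, (1 / fst X) *\<^sub>R w) = (0, w)" for w
    by (simp add: An_bracket_def)
  then show "X \<noteq> 0 \<and> (\<forall>w. B X (0, w) = 0)"
    using X geo by metis
next
  assume "X \<noteq> 0 \<and> (\<forall>w. B X (0, w) = 0)"
  then show "geodesic_element B X"
    unfolding geodesic_element_def An_bracket_def by simp
qed

text \<open>The Gram map \<open>v \<mapsto> (B (0, v) (0, e\<^sub>i))\<^sub>i\<close> is injective, hence surjective, so the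
  linear system \<open>B (1, v) (0, e\<^sub>i) = 0\<close> is solvable.\<close>

lemma ex_orthogonal_fibre:
  fixes B :: "'n::finite An \<Rightarrow> 'n An \<Rightarrow> real"
  assumes ip: "is_inner_product B"
  obtains v where "\<And>w. B (1, v) (0, w) = 0"
proof -
  define L where "L v = (\<chi> i. B (0, v) (0, axis i 1))" for v :: "real ^ 'n"
  note lin = is_inner_product_linear_fibre[OF ip]
  have "linear L"
    unfolding L_def
    by (rule linearI) (simp_all add: vec_eq_iff linear_add[OF lin(2)] linear_scale[OF lin(2)])
  moreover have "inj L"
  proof (rule linear_injective_0[OF \<open>linear L\<close>, THEN iffD2], intro allI impI)
    fix v assume "L v = 0"
    then have "B (0, v) (0, w) = 0" for w
      using linear_eq_0_on_axis[OF lin(1)] unfolding L_def by (simp add: vec_eq_iff)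
    then show "v = 0"
      using is_inner_product_self_eq_0[OF ip, of "(0, v)"] by (simp add: zero_prod_def)
  qed
  ultimately obtain v where v: "L v = (\<chi> i. - B (1, 0) (0, axis i 1))"
    using linear_injective_imp_surjective by (metis surjD)
  have "B (1, v) (0, axis i 1) = 0" for i
  proof -
    have "B (1, v) (0, axis i 1) = B (1, 0) (0, axis i 1) + B (0, v) (0, axis i 1)"
      using linear_add[OF is_inner_productD(2)[OF ip], of "(1, 0)" "(0, v)"] by simp
    then show ?thesis
      using v unfolding L_def by (simp add: vec_eq_iff)
  qed
  then show thesis
    using that linear_eq_0_on_axis[OF lin(1)] by blast
qed

lemma orthogonal_fibre_collinear:
  fixes B :: "'n::finite An \<Rightarrow> 'n An \<Rightarrow> real"
  assumes ip: "is_inner_product B" and "fst X \<noteq> 0"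
    and orth: "\<And>w. B X (0, w) = 0" "\<And>w. B X' (0, w) = 0"
  shows "\<exists>c. X' = c *\<^sub>R X"
proof -
  define D where "D = X' - (fst X' / fst X) *\<^sub>R X"
  have "fst D = 0"
    unfolding D_def using \<open>fst X \<noteq> 0\<close> by simp
  then have "B X' D = 0" "B X D = 0"
    using orth by (metis prod.collapse)+
  then have "B D D = 0"
    unfolding D_def
    using linear_diff[OF is_inner_productD(2)[OF ip]] linear_scale[OF is_inner_productD(2)[OF ip]]
    by simp
  then have "D = 0"
    by (rule is_inner_product_self_eq_0[OF ip])
  then show ?thesis
    unfolding D_def by auto
qed

theorem lemma5p1:
  fixes B :: "'n::finite An \<Rightarrow> 'n An \<Rightarrow> real"
  assumes "is_inner_product B"
  shows "(\<forall>X. geodesic_element B X \<longrightarrow> (\<forall>W\<in>An_derived. B X W = 0))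
    \<and> (\<exists>X. geodesic_element B X)
    \<and> (\<forall>X X'. geodesic_element B X \<and> geodesic_element B X' \<longrightarrow> (\<exists>c::real. X' = c *\<^sub>R X))"
proof (intro conjI allI impI ballI)
  note geodesic = geodesic_element_iff_orthogonal_fibre[OF assms]
  show "B X W = 0" if "geodesic_element B X" "W \<in> An_derived" for X W
    using that An_derived_subset_fibre geodesic by blast
  obtain v where "\<And>w. B (1, v) (0, w) = 0"
    using ex_orthogonal_fibre[OF assms] by blast
  then show "\<exists>X. geodesic_element B X"
    using geodesic by (metis fst_zero zero_neq_one fst_conv)
  show "\<exists>c. X' = c *\<^sub>R X" if "geodesic_element B X \<and> geodesic_element B X'" for X X'
  proof (rule orthogonal_fibre_collinear[OF assms])
    show "fst X \<noteq> 0"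
      using that geodesic is_inner_product_self_eq_0[OF assms, of X]
      by (metis fst_zero prod.collapse)
  qed (use that geodesic in auto)
qed

end
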